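(* Let $\mathbf{d}=(d_1\ge d_2\ge\cdots\ge d_n)$ be a zero-free graphical degree sequence. Consider the following procedure applied to $\mathbf{d}$: (1) If $d_1\ge n-2$ or $d_n\ge\lfloor n/2\rfloor$, return True. (2) Otherwise, if $d_1=d_n$, return False. (3) Otherwise, let $s_u=\max\{s: s<n-d_{s+1}\}$. If there exists an integer $s$ with $d_1+1\le s\le s_u$ such that both $(d_1,\dots,d_s)$ and $(d_{s+1},\dots,d_n)$ are graphical, return False. (4) Otherwise, for each integer $l$ from $d_n+1$ to $\min\{\lfloor n/2\rfloor,\, n-d_1-1\}$: if $d_{n+1-l}<l$, let $m=\min\{i: d_i<l\}$; if moreover $l\le n-m$, then for every choice of $l$ indices from $\{m,m+1,\dots,n\}$, let $\mathbf{s_1}$ be the subsequence of $\mathbf{d}$ at these indices and $\mathbf{s_2}$ the subsequence of $\mathbf{d}$ at the remaining $n-l$ indices; if $\mathbf{s_1}$ and $\mathbf{s_2}$ both have even sum and are both graphical, return False. (5) If the procedure has not returned, return True. Then this procedure returns True if and only if $\mathbf{d}$ is forcibly connected.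
   Context: A graphical degree sequence of length $n$ is a non-increasing sequence of non-negative integers that is the vertex degree sequence of some simple graph (finite, undirected, no loops or multiple edges) on $n$ vertices; such a graph is a realization of the sequence. A finite sequence of non-negative integers is called graphical if, when sorted in non-increasing order, it is a graphical degree sequence. A sequence is zero-free if all its terms are positive. A graphical degree sequence is forcibly connected if every one of its realizations is a connected graph. *)

theory Defs
  imports Main
begin

definition simple_graph_on :: "nat \<Rightarrow> (nat \<Rightarrow> nat \<Rightarrow> bool) \<Rightarrow> bool" where
  "simple_graph_on n E \<longleftrightarrow>
     (\<forall>u v. E u v \<longrightarrow> u < n \<and> v < n) \<and>
     (\<forall>u v. E u v \<longrightarrow> E v u) \<and>
     (\<forall>u. \<not> E u u)"

definition degree :: "nat \<Rightarrow> (nat \<Rightarrow> nat \<Rightarrow> bool) \<Rightarrow> nat \<Rightarrow> nat" where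
  "degree n E u = card {v. v < n \<and> E u v}"

definition realizes :: "(nat \<Rightarrow> nat \<Rightarrow> bool) \<Rightarrow> nat list \<Rightarrow> bool" where
  "realizes E d \<longleftrightarrow> simple_graph_on (length d) E \<and>
     (\<forall>i < length d. degree (length d) E i = d ! i)"

definition connected_graph :: "nat \<Rightarrow> (nat \<Rightarrow> nat \<Rightarrow> bool) \<Rightarrow> bool" where
  "connected_graph n E \<longleftrightarrow>
     (\<forall>u < n. \<forall>v < n. (u, v) \<in> {(a, b). a < n \<and> b < n \<and> E a b}\<^sup>*)"

definition nonincreasing :: "nat list \<Rightarrow> bool" where
  "nonincreasing d \<longleftrightarrow> sorted_wrt (\<ge>) d"

definition graphical_degree_sequence :: "nat list \<Rightarrow> bool" where
  "graphical_degree_sequence d \<longleftrightarrow> nonincreasing d \<and> (\<exists>E. realizes E d)"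

definition graphical :: "nat list \<Rightarrow> bool" where
  "graphical xs \<longleftrightarrow> graphical_degree_sequence (rev (sort xs))"

definition zero_free :: "nat list \<Rightarrow> bool" where
  "zero_free d \<longleftrightarrow> (\<forall>x \<in> set d. 0 < x)"

definition forcibly_connected :: "nat list \<Rightarrow> bool" where
  "forcibly_connected d \<longleftrightarrow> graphical_degree_sequence d \<and>
     (\<forall>E. realizes E d \<longrightarrow> connected_graph (length d) E)"

text \<open>1-based access: dd d i = d_i.\<close>
definition dd :: "nat list \<Rightarrow> nat \<Rightarrow> nat" where
  "dd d i = d ! (i - 1)"

definition subseq_at :: "nat list \<Rightarrow> nat set \<Rightarrow> nat list" where
  "subseq_at d I = nths d ((\<lambda>i. i - 1) ` I)"

definition subseq_off :: "nat list \<Rightarrow> nat set \<Rightarrow> nat list" where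
  "subseq_off d I = nths d ({0..<length d} - (\<lambda>i. i - 1) ` I)"

definition step1 :: "nat list \<Rightarrow> bool" where
  "step1 d \<longleftrightarrow> (let n = length d in int (dd d 1) \<ge> int n - 2 \<or> dd d n \<ge> n div 2)"

definition step2 :: "nat list \<Rightarrow> bool" where
  "step2 d \<longleftrightarrow> dd d 1 = dd d (length d)"

definition s_u :: "nat list \<Rightarrow> nat" where
  "s_u d = Max {s. s < length d \<and> int s < int (length d) - int (dd d (s + 1))}"

definition step3 :: "nat list \<Rightarrow> bool" where
  "step3 d \<longleftrightarrow> (\<exists>s. dd d 1 + 1 \<le> s \<and> s \<le> s_u d \<and>
      graphical (take s d) \<and> graphical (drop s d))"

definition min_index_below :: "nat list \<Rightarrow> nat \<Rightarrow> nat" where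
  "min_index_below d l = (LEAST i. 1 \<le> i \<and> i \<le> length d \<and> dd d i < l)"

definition step4 :: "nat list \<Rightarrow> bool" where
  "step4 d \<longleftrightarrow> (let n = length d in
     \<exists>l. dd d n + 1 \<le> l \<and> int l \<le> min (int (n div 2)) (int n - int (dd d 1) - 1) \<and>
       dd d (n + 1 - l) < l \<and>
       (let m = min_index_below d l in
         l \<le> n - m \<and>
         (\<exists>I. I \<subseteq> {m..n} \<and> card I = l \<and>
            even (sum_list (subseq_at d I)) \<and> even (sum_list (subseq_off d I)) \<and>
            graphical (subseq_at d I) \<and> graphical (subseq_off d I))))"

definition procedure :: "nat list \<Rightarrow> bool" where
  "procedure d = (if step1 d then True
                  else if step2 d then False
                  else if step3 d then False
                  else if step4 d then False
                  else True)"

end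

theory Submission
  imports Defs "HOL-Combinatorics.Permutations"
begin

text \<open>A realization is disconnected iff some nonempty proper vertex set is closed under
  adjacency. Restricting a realization to such a set and to its complement splits d into two
  graphical sequences, and conversely a disjoint union realizes any such split. A closed set
  containing a vertex of degree k has more than k vertices; this rules out a split when
  d_1 \<ge> n - 2 (the part avoiding the first vertex would have at most one vertex, which cannot
  have positive degree) or when d_n \<ge> \<lfloor>n/2\<rfloor> (both parts would have more than d_n
  vertices). Steps 2 to 4 each exhibit a split, for a regular sequence via two circulant graphs.
  Conversely, the smaller part C of a disconnected realization has l \<le> n/2 vertices, all of
  degree below l, so by monotonicity all its (1-based) indices are at least m: either l \<le> n - m
  and C witnesses step 4, or C consists exactly of the last l indices and s = n - l witnesses
  step 3.\<close>

section \<open>Vertex sets closed under adjacency\<close>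

definition edge_closed :: "nat \<Rightarrow> (nat \<Rightarrow> nat \<Rightarrow> bool) \<Rightarrow> nat set \<Rightarrow> bool" where
  "edge_closed n E A \<longleftrightarrow> A \<subseteq> {..<n} \<and> (\<forall>x y. E x y \<longrightarrow> x \<in> A \<longrightarrow> y \<in> A)"

definition proper_edge_closed :: "nat \<Rightarrow> (nat \<Rightarrow> nat \<Rightarrow> bool) \<Rightarrow> nat set \<Rightarrow> bool" where
  "proper_edge_closed n E A \<longleftrightarrow> edge_closed n E A \<and> A \<noteq> {} \<and> A \<noteq> {..<n}"

definition disconnected_realizable :: "nat list \<Rightarrow> bool" where
  "disconnected_realizable d \<longleftrightarrow> (\<exists>E. realizes E d \<and> \<not> connected_graph (length d) E)"

lemma edge_closed_compl:
  assumes "simple_graph_on n E" "edge_closed n E A"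
  shows "edge_closed n E ({..<n} - A)"
  using assms unfolding edge_closed_def simple_graph_on_def by blast

lemma proper_edge_closed_compl:
  assumes "simple_graph_on n E" "proper_edge_closed n E A"
  shows "proper_edge_closed n E ({..<n} - A)"
  using assms edge_closed_compl unfolding proper_edge_closed_def edge_closed_def by blast

lemma card_compl_edge_closed:
  assumes "edge_closed n E A"
  shows "card ({..<n} - A) = n - card A"
  using assms unfolding edge_closed_def
  by (metis card_Diff_subset card_lessThan finite_lessThan finite_subset)

lemma nth_less_card_edge_closed:
  assumes r: "realizes E d" and A: "edge_closed (length d) E A" and x: "x \<in> A"
  shows "d ! x < card A"
proof -
  have "finite A" using A unfolding edge_closed_def by (meson finite_lessThan finite_subset)
  have "{v. v < length d \<and> E x v} \<subseteq> A - {x}"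
    using r A x unfolding realizes_def edge_closed_def simple_graph_on_def by auto
  hence "degree (length d) E x \<le> card (A - {x})"
    unfolding degree_def using \<open>finite A\<close> by (simp add: card_mono)
  also have "\<dots> < card A" using \<open>finite A\<close> x by (meson card_Diff1_less)
  finally show ?thesis using r A x unfolding realizes_def edge_closed_def by auto
qed

lemma connected_graph_iff_no_proper_edge_closed:
  assumes "simple_graph_on n E"
  shows "connected_graph n E \<longleftrightarrow> \<not> (\<exists>A. proper_edge_closed n E A)"
proof
  assume c: "connected_graph n E"
  show "\<not> (\<exists>A. proper_edge_closed n E A)"
  proof
    assume "\<exists>A. proper_edge_closed n E A"
    then obtain A a b where A: "proper_edge_closed n E A" and a: "a \<in> A" and b: "b < n" "b \<notin> A"
      unfolding proper_edge_closed_def edge_closed_def by blast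
    have "a < n" using A a unfolding proper_edge_closed_def edge_closed_def by blast
    hence "(a, b) \<in> {(a, b). a < n \<and> b < n \<and> E a b}\<^sup>*"
      using c b unfolding connected_graph_def by blast
    hence "b \<in> A"
    proof (induction rule: rtrancl_induct)
      case base then show ?case using a by simp
    next
      case (step y z) then show ?case
        using A unfolding proper_edge_closed_def edge_closed_def by blast
    qed
    thus False using b by blast
  qed
next
  assume nc: "\<not> (\<exists>A. proper_edge_closed n E A)"
  show "connected_graph n E"
    unfolding connected_graph_def
  proof (intro allI impI)
    fix u v assume u: "u < n" and v: "v < n"
    let ?R = "{(a, b). a < n \<and> b < n \<and> E a b}"
    define A where "A = {w. w < n \<and> (u, w) \<in> ?R\<^sup>*}"
    have "edge_closed n E A"
      using assms unfolding edge_closed_def A_def simple_graph_on_def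
      by (auto intro: rtrancl_into_rtrancl)
    moreover have "u \<in> A" using u unfolding A_def by simp
    ultimately have "A = {..<n}" using nc unfolding proper_edge_closed_def by blast
    thus "(u, v) \<in> ?R\<^sup>*" using v unfolding A_def by blast
  qed
qed

lemma disconnected_realizable_iff:
  "disconnected_realizable d \<longleftrightarrow> (\<exists>E A. realizes E d \<and> proper_edge_closed (length d) E A)"
  using connected_graph_iff_no_proper_edge_closed
  unfolding disconnected_realizable_def realizes_def by blast

lemma forcibly_connected_iff:
  assumes "graphical_degree_sequence d"
  shows "forcibly_connected d \<longleftrightarrow> \<not> disconnected_realizable d"
  using assms unfolding forcibly_connected_def disconnected_realizable_def by blast

section \<open>Rearranging, concatenating and restricting realizations\<close>

lemma realizes_relabel:
  assumes r: "realizes E ys" and p: "p permutes {..<length ys}"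
  shows "realizes (\<lambda>u v. E (p u) (p v)) (permute_list p ys)"
    and "proper_edge_closed (length ys) E A \<Longrightarrow>
           proper_edge_closed (length ys) (\<lambda>u v. E (p u) (p v)) {u. u < length ys \<and> p u \<in> A}"
proof -
  define n where "n = length ys"
  define E' where "E' = (\<lambda>u v. E (p u) (p v))"
  have pin: "p u < n \<longleftrightarrow> u < n" for u
    using p unfolding n_def by (metis lessThan_iff permutes_not_in permutes_in_image)
  have injp: "inj p" using p permutes_inj by blast
  have surjp: "\<exists>u. w = p u" for w using p permutes_surj by (metis surj_def)
  have sg: "simple_graph_on n E" using r unfolding realizes_def n_def by blast
  have sg': "simple_graph_on n E'"
    using sg pin unfolding simple_graph_on_def E'_def by (metis injp injD)
  have "degree n E' u = degree n E (p u)" for u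
  proof -
    have "p ` {v. v < n \<and> E' u v} = {w. w < n \<and> E (p u) w}"
    proof (rule set_eqI, rule iffI)
      fix w assume w: "w \<in> {w. w < n \<and> E (p u) w}"
      obtain v where "w = p v" using surjp by blast
      then show "w \<in> p ` {v. v < n \<and> E' u v}" using w pin unfolding E'_def by auto
    qed (use pin in \<open>auto simp: E'_def\<close>)
    moreover have "inj_on p {v. v < n \<and> E' u v}" using inj_on_subset[OF injp subset_UNIV] .
    ultimately show ?thesis unfolding degree_def by (metis card_image)
  qed
  then show "realizes E' (permute_list p ys)"
    using sg' r pin p unfolding realizes_def n_def by (simp add: permute_list_nth)
  assume A: "proper_edge_closed n E A"
  have cl: "edge_closed n E' {u. u < n \<and> p u \<in> A}"
    using A sg' unfolding proper_edge_closed_def edge_closed_def E'_def simple_graph_on_def by blast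
  obtain a b where "a \<in> A" "b < n" "b \<notin> A"
    using A unfolding proper_edge_closed_def edge_closed_def by blast
  moreover obtain a' b' where "a = p a'" "b = p b'" using surjp by blast
  moreover have "a < n" using A \<open>a \<in> A\<close> unfolding proper_edge_closed_def edge_closed_def by blast
  ultimately have "a' \<in> {u. u < n \<and> p u \<in> A}" "b' \<in> {..<n} - {u. u < n \<and> p u \<in> A}"
    using pin by auto
  then show "proper_edge_closed n E' {u. u < n \<and> p u \<in> A}"
    using cl unfolding proper_edge_closed_def by blast
qed

lemma realizes_mset_eq:
  assumes r: "realizes E ys" and m: "mset xs = mset ys"
  obtains E' where "realizes E' xs"
    and "\<And>A. proper_edge_closed (length ys) E A \<Longrightarrow> \<exists>A'. proper_edge_closed (length xs) E' A'"
proof -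
  obtain p where p: "p permutes {..<length ys}" "permute_list p ys = xs"
    using mset_eq_permutation[OF m] by blast
  have "length xs = length ys" using m by (metis size_mset)
  then show thesis
    using that[of "\<lambda>u v. E (p u) (p v)"] realizes_relabel[OF r p(1)] p(2) by auto
qed

lemma graphical_iff_realizable: "graphical xs \<longleftrightarrow> (\<exists>E. realizes E xs)"
proof
  assume "graphical xs"
  then obtain E where "realizes E (rev (sort xs))"
    unfolding graphical_def graphical_degree_sequence_def by blast
  then show "\<exists>E. realizes E xs" by (rule realizes_mset_eq) auto
next
  assume "\<exists>E. realizes E xs"
  then obtain E E' where "realizes E xs" "realizes E' (rev (sort xs))"
    using realizes_mset_eq[of _ xs "rev (sort xs)"] by (metis mset_rev mset_sort)
  moreover have "nonincreasing (rev (sort xs))"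
    unfolding nonincreasing_def by (simp add: sorted_wrt_rev)
  ultimately show "graphical xs"
    unfolding graphical_def graphical_degree_sequence_def by blast
qed

lemma disconnected_realizable_mset_eq:
  assumes "disconnected_realizable ys" "mset xs = mset ys"
  shows "disconnected_realizable xs"
proof -
  obtain E A where "realizes E ys" "proper_edge_closed (length ys) E A"
    using assms(1) unfolding disconnected_realizable_iff by blast
  then show ?thesis
    using realizes_mset_eq[OF _ assms(2)] unfolding disconnected_realizable_iff by metis
qed

lemma even_sum_list_if_realizes:
  assumes r: "realizes E d"
  shows "even (sum_list d)"
proof -
  define n where "n = length d"
  have sg: "simple_graph_on n E" using r unfolding realizes_def n_def by blast
  define P where "P = Sigma {..<n} (\<lambda>u. {v. v < n \<and> E u v})"
  define L where "L = {p \<in> P. fst p < snd p}"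
  have "sum_list d = (\<Sum>i<n. card {v. v < n \<and> E i v})"
    using r unfolding realizes_def degree_def n_def
    by (simp add: sum_list_sum_nth atLeast0LessThan)
  also have "\<dots> = card P" unfolding P_def by (simp add: card_SigmaI)
  also have "P = L \<union> prod.swap ` L"
    using sg unfolding P_def L_def simple_graph_on_def by (auto simp: image_iff) (metis nat_neq_iff)
  also have "card \<dots> = card L + card (prod.swap ` L)"
    by (rule card_Un_disjoint) (auto simp: L_def P_def)
  also have "card (prod.swap ` L) = card L" by (simp add: card_image)
  finally show ?thesis by simp
qed

lemma even_sum_list_if_graphical: "graphical xs \<Longrightarrow> even (sum_list xs)"
  using graphical_iff_realizable even_sum_list_if_realizes by blast

lemma disconnected_realizable_append:
  assumes r1: "realizes E1 xs" and r2: "realizes E2 ys" and "xs \<noteq> []" "ys \<noteq> []"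
  shows "disconnected_realizable (xs @ ys)"
proof -
  define a where "a = length xs"
  define b where "b = length ys"
  define E where "E = (\<lambda>u v. (u < a \<and> v < a \<and> E1 u v) \<or> (a \<le> u \<and> a \<le> v \<and> E2 (u - a) (v - a)))"
  have s1: "simple_graph_on a E1" using r1 unfolding realizes_def a_def by blast
  have s2: "simple_graph_on b E2" using r2 unfolding realizes_def b_def by blast
  have sg: "simple_graph_on (a + b) E"
    using s1 s2 unfolding simple_graph_on_def E_def by fastforce
  have deg1: "degree (a + b) E u = xs ! u" if "u < a" for u
  proof -
    have "{v. v < a + b \<and> E u v} = {v. v < a \<and> E1 u v}"
      using that s1 unfolding E_def simple_graph_on_def by auto
    thus ?thesis using r1 that unfolding realizes_def degree_def a_def by simp
  qed
  have deg2: "degree (a + b) E u = ys ! (u - a)" if "a \<le> u" "u < a + b" for u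
  proof -
    have "{v. v < a + b \<and> E u v} = (\<lambda>w. w + a) ` {w. w < b \<and> E2 (u - a) w}"
    proof (rule set_eqI, rule iffI)
      fix v assume "v \<in> {v. v < a + b \<and> E u v}"
      hence "a \<le> v" "v < a + b" "E2 (u - a) (v - a)" using that unfolding E_def by auto
      thus "v \<in> (\<lambda>w. w + a) ` {w. w < b \<and> E2 (u - a) w}"
        by (intro image_eqI[of _ _ "v - a"]) auto
    qed (use that in \<open>auto simp: E_def\<close>)
    hence "degree (a + b) E u = card {w. w < b \<and> E2 (u - a) w}"
      unfolding degree_def by (simp add: card_image)
    thus ?thesis using r2 that unfolding realizes_def degree_def b_def by auto
  qed
  have "realizes E (xs @ ys)"
    unfolding realizes_def using sg deg1 deg2 by (simp add: a_def b_def nth_append)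
  moreover have "proper_edge_closed (a + b) E {..<a}"
  proof -
    have "0 < a" "a < a + b" using \<open>xs \<noteq> []\<close> \<open>ys \<noteq> []\<close> unfolding a_def b_def by auto
    then have "0 \<in> {..<a}" "a \<in> {..<a + b} - {..<a}" by auto
    moreover have "edge_closed (a + b) E {..<a}" unfolding edge_closed_def E_def by auto
    ultimately show ?thesis unfolding proper_edge_closed_def by (metis Diff_cancel empty_iff)
  qed
  ultimately show ?thesis unfolding disconnected_realizable_iff a_def b_def by auto
qed

lemma disconnected_realizable_if_split:
  assumes "graphical xs" "graphical ys" "xs \<noteq> []" "ys \<noteq> []" "mset d = mset (xs @ ys)"
  shows "disconnected_realizable d"
proof -
  obtain E1 E2 where "realizes E1 xs" "realizes E2 ys"
    using assms(1,2) graphical_iff_realizable by blast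
  then have "disconnected_realizable (xs @ ys)"
    using assms(3,4) by (rule disconnected_realizable_append)
  then show ?thesis using assms(5) by (rule disconnected_realizable_mset_eq)
qed

lemma nths_eq_map_filter: "nths xs A = map (nth xs) (filter (\<lambda>i. i \<in> A) [0..<length xs])"
proof (induction xs arbitrary: A)
  case (Cons x xs)
  have "[0..<length (x # xs)] = 0 # map Suc [0..<length xs]"
    by (metis map_Suc_upt upt_conv_Cons zero_less_Suc length_Cons)
  then show ?case using Cons by (simp add: nths_Cons filter_map comp_def)
qed simp

lemma nths_cong:
  assumes "A \<inter> {..<length xs} = B \<inter> {..<length xs}"
  shows "nths xs A = nths xs B"
  using assms unfolding nths_eq_map_filter by (intro arg_cong[where f = "map _"] filter_cong) auto

lemma mset_nths_add_mset_nths_compl: "mset (nths xs A) + mset (nths xs (- A)) = mset xs"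
proof (induction xs arbitrary: A)
  case (Cons x xs)
  have "{j. Suc j \<in> - A} = - {j. Suc j \<in> A}" by auto
  then show ?case using Cons[of "{j. Suc j \<in> A}"] by (simp add: nths_Cons)
qed simp

lemma graphical_nths_edge_closed:
  assumes r: "realizes E d" and c: "edge_closed (length d) E C"
  shows "graphical (nths d C)"
proof -
  define n where "n = length d"
  define cs where "cs = filter (\<lambda>i. i \<in> C) [0..<n]"
  define l where "l = length cs"
  have dcs: "distinct cs" unfolding cs_def by simp
  have setcs: "set cs = C" using c unfolding cs_def edge_closed_def n_def by auto
  define E' where "E' = (\<lambda>a b. a < l \<and> b < l \<and> E (cs ! a) (cs ! b))"
  have sg: "simple_graph_on n E" using r unfolding realizes_def n_def by blast
  have sg': "simple_graph_on l E'" using sg dcs unfolding simple_graph_on_def E'_def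
    by (metis nth_eq_iff_index_eq)
  have "degree l E' a = d ! (cs ! a)" if a: "a < l" for a
  proof -
    have ca: "cs ! a \<in> C" using a setcs nth_mem l_def by blast
    have "nth cs ` {b. b < l \<and> E' a b} = {y. y < n \<and> E (cs ! a) y}"
    proof (rule set_eqI, rule iffI)
      fix y assume y: "y \<in> {y. y < n \<and> E (cs ! a) y}"
      hence "y \<in> C" using c ca unfolding edge_closed_def by blast
      then obtain b where "b < l" "cs ! b = y" using setcs unfolding l_def by (metis in_set_conv_nth)
      thus "y \<in> nth cs ` {b. b < l \<and> E' a b}" using y a unfolding E'_def by auto
    qed (use sg in \<open>auto simp: E'_def simple_graph_on_def\<close>)
    moreover have "inj_on (nth cs) {b. b < l \<and> E' a b}"
      using dcs unfolding l_def by (simp add: inj_on_nth)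
    ultimately have "degree l E' a = degree n E (cs ! a)" unfolding degree_def
      by (metis card_image)
    moreover have "cs ! a < n" using ca c unfolding edge_closed_def n_def by blast
    ultimately show ?thesis using r unfolding realizes_def n_def by simp
  qed
  then have "realizes E' (map (nth d) cs)" unfolding realizes_def using sg' l_def by simp
  moreover have "nths d C = map (nth d) cs" unfolding cs_def n_def by (rule nths_eq_map_filter)
  ultimately show ?thesis using graphical_iff_realizable by metis
qed

section \<open>Regular sequences\<close>

lemma realizable_replicate_card_circulant:
  assumes S: "\<And>s. s \<in> S \<Longrightarrow> 0 < s \<and> s < a \<and> a - s \<in> S"
  shows "\<exists>E. realizes E (replicate a (card S))"
proof -
  define \<delta> where "\<delta> = (\<lambda>u v. if v \<le> u then u - v else u + a - (v::nat))"
  define E where "E = (\<lambda>u v. u < a \<and> v < a \<and> \<delta> u v \<in> S)"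
  have "\<delta> u u \<notin> S" for u using S unfolding \<delta>_def by fastforce
  moreover have "\<delta> v u = a - \<delta> u v" if "u < a" "v < a" "u \<noteq> v" for u v
    using that unfolding \<delta>_def by auto
  ultimately have sg: "simple_graph_on a E"
    unfolding simple_graph_on_def E_def using S by metis
  have "degree a E u = card S" if u: "u < a" for u
  proof -
    have "\<delta> u ` {v. v < a \<and> E u v} = S"
    proof (rule set_eqI, rule iffI)
      fix s assume s: "s \<in> S"
      define v where "v = (if s \<le> u then u - s else u + a - s)"
      have "v < a" "\<delta> u v = s" using S[OF s] u unfolding v_def \<delta>_def by auto
      thus "s \<in> \<delta> u ` {v. v < a \<and> E u v}" using s u unfolding E_def by force
    qed (auto simp: E_def)
    moreover have "inj_on (\<delta> u) {v. v < a \<and> E u v}"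
      using u by (intro inj_onI) (auto simp: \<delta>_def split: if_splits)
    ultimately show ?thesis unfolding degree_def by (metis card_image)
  qed
  then have "realizes E (replicate a (card S))" unfolding realizes_def using sg by simp
  thus ?thesis by blast
qed

lemma symmetric_residue_set_exists:
  fixes k a :: nat
  assumes "k < a" "even (a * k)"
  obtains S where "\<And>s. s \<in> S \<Longrightarrow> 0 < s \<and> s < a \<and> a - s \<in> S" "card S = k"
proof -
  define h where "h = k div 2"
  define S where "S = {1..h} \<union> {a - h..<a} \<union> (if odd k then {a div 2} else {})"
  have h2: "2 * h \<le> k" "k \<le> 2 * h + 1" unfolding h_def by auto
  have aev: "odd k \<Longrightarrow> even a" using assms by auto
  have "0 < s \<and> s < a \<and> a - s \<in> S" if "s \<in> S" for s
    using that assms h2 aev unfolding S_def by (auto split: if_splits)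
  moreover have "card S = k"
  proof -
    have "card ({1..h} \<union> {a - h..<a}) = 2 * h" using assms h2
      by (subst card_Un_disjoint) auto
    moreover have "odd k \<Longrightarrow> a div 2 \<notin> {1..h} \<union> {a - h..<a}" using aev assms h2 by auto
    ultimately show ?thesis unfolding S_def h_def by (cases "odd k") auto
  qed
  ultimately show thesis by (rule that)
qed

lemma graphical_replicate:
  assumes "k < a" "even (a * k)"
  shows "graphical (replicate a k)"
proof -
  obtain S where "\<And>s. s \<in> S \<Longrightarrow> 0 < s \<and> s < a \<and> a - s \<in> S" "card S = k"
    using symmetric_residue_set_exists[OF assms] by blast
  then show ?thesis
    using realizable_replicate_card_circulant graphical_iff_realizable by metis
qed

section \<open>Correctness of the procedure\<close>

lemma nonincreasing_nth_antimono:
  assumes "nonincreasing d" "i \<le> j" "j < length d"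
  shows "d ! j \<le> d ! i"
  using assms sorted_wrt_nth_less[of "(\<ge>)" d i j] unfolding nonincreasing_def
  by (cases "i = j") auto

lemma nth_add_3_le_length_if_proper_edge_closed:
  assumes r: "realizes E d" and zf: "zero_free d"
    and A: "proper_edge_closed (length d) E A" and x: "x < length d"
  shows "d ! x + 3 \<le> length d"
proof -
  define n where "n = length d"
  have sg: "simple_graph_on n E" using r unfolding realizes_def n_def by blast
  have bound: "d ! x + 3 \<le> n" if X: "proper_edge_closed n E X" "x \<in> X" for X
  proof -
    let ?Y = "{..<n} - X"
    have cX: "edge_closed n E X" and cY: "edge_closed n E ?Y"
      using X edge_closed_compl[OF sg] unfolding proper_edge_closed_def by auto
    obtain y where y: "y \<in> ?Y" using X unfolding proper_edge_closed_def edge_closed_def by blast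
    then have "0 < d ! y" using zf unfolding zero_free_def n_def by auto
    then have "1 < card ?Y" using nth_less_card_edge_closed[OF r _ y] cY n_def by simp
    moreover have "d ! x < card X" using nth_less_card_edge_closed[OF r _ X(2)] cX n_def by simp
    moreover have "card ?Y = n - card X" by (rule card_compl_edge_closed[OF cX])
    ultimately show ?thesis by linarith
  qed
  have A': "proper_edge_closed n E A" using A n_def by simp
  have "x \<in> A \<or> x \<in> {..<n} - A" using x n_def by blast
  then show ?thesis
    using bound[OF A'] bound[OF proper_edge_closed_compl[OF sg A']] n_def by blast
qed

lemma last_degree_le_half_if_proper_edge_closed:
  assumes r: "realizes E d" and ni: "nonincreasing d"
    and A: "proper_edge_closed (length d) E A"
  shows "2 * d ! (length d - 1) + 2 \<le> length d"
proof -
  define n where "n = length d"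
  let ?B = "{..<n} - A"
  have cA: "edge_closed n E A" using A unfolding proper_edge_closed_def n_def by blast
  have cB: "edge_closed n E ?B"
    using edge_closed_compl[OF _ cA] r unfolding realizes_def n_def by blast
  obtain a b where a: "a \<in> A" and b: "b \<in> ?B"
    using A unfolding proper_edge_closed_def edge_closed_def n_def by blast
  have "a < n" "b < n" using a b cA unfolding edge_closed_def by auto
  then have "d ! (n - 1) \<le> d ! a" "d ! (n - 1) \<le> d ! b"
    using nonincreasing_nth_antimono[OF ni] n_def by auto
  moreover have "d ! a < card A" "d ! b < card ?B"
    using nth_less_card_edge_closed[OF r] cA cB a b n_def by auto
  moreover have "card ?B = n - card A" by (rule card_compl_edge_closed[OF cA])
  ultimately show ?thesis unfolding n_def by linarith
qed

lemma not_step1_if_disconnected_realizable: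
  assumes "disconnected_realizable d" "nonincreasing d" "zero_free d"
  shows "\<not> step1 d"
proof -
  obtain E A where r: "realizes E d" and A: "proper_edge_closed (length d) E A"
    using assms(1) unfolding disconnected_realizable_iff by blast
  have "d \<noteq> []" using A unfolding proper_edge_closed_def edge_closed_def by auto
  then have "d ! 0 + 3 \<le> length d"
    using nth_add_3_le_length_if_proper_edge_closed[OF r assms(3) A] by simp
  moreover have "2 * d ! (length d - 1) + 2 \<le> length d"
    using last_degree_le_half_if_proper_edge_closed[OF r assms(2) A] .
  ultimately show ?thesis unfolding step1_def dd_def Let_def by auto
qed

lemma disconnected_realizable_if_step2:
  assumes g: "graphical_degree_sequence d" and zf: "zero_free d"
    and ns1: "\<not> step1 d" and s2: "step2 d"
  shows "disconnected_realizable d"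
proof -
  define n where "n = length d"
  define k where "k = d ! 0"
  have ni: "nonincreasing d" using g unfolding graphical_degree_sequence_def by blast
  obtain E where r: "realizes E d" using g unfolding graphical_degree_sequence_def by blast
  have n0: "n \<noteq> 0" using ns1 unfolding step1_def n_def Let_def by auto
  have last: "d ! (n - 1) = k" using s2 unfolding step2_def dd_def k_def n_def by simp
  have "d ! i = k" if "i < n" for i
    using nonincreasing_nth_antimono[OF ni, of 0 i] nonincreasing_nth_antimono[OF ni, of i "n - 1"]
      that last n0 k_def n_def by fastforce
  then have drep: "d = replicate n k" by (intro nth_equalityI) (auto simp: n_def)
  have kn: "k < n div 2" using ns1 last unfolding step1_def dd_def Let_def n_def by auto
  have "even (n * k)" using even_sum_list_if_realizes[OF r] drep by (simp add: sum_list_replicate)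
  then have "even ((n - (k + 1)) * k)" using kn by (cases "even k") auto
  then have g2: "graphical (replicate (n - (k + 1)) k)"
    using graphical_replicate kn by (simp add: mult.commute)
  have g1: "graphical (replicate (k + 1) k)" by (rule graphical_replicate) auto
  have "(k + 1) + (n - (k + 1)) = n" using kn by linarith
  then have "d = replicate (k + 1) k @ replicate (n - (k + 1)) k"
    using drep by (metis replicate_add)
  moreover have "replicate (n - (k + 1)) k \<noteq> []" using kn by simp
  ultimately show ?thesis
    using disconnected_realizable_if_split[OF g1 g2]
    by (metis replicate_empty add_eq_0_iff_both_eq_0 one_neq_zero)
qed

lemma s_u_less_length:
  assumes g: "graphical_degree_sequence d" and "d \<noteq> []"
  shows "s_u d < length d"
proof -
  define n where "n = length d"
  let ?S = "{s. s < n \<and> int s < int n - int (dd d (s + 1))}"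
  obtain E where r: "realizes E d" using g unfolding graphical_degree_sequence_def by blast
  have "edge_closed n E {..<n}" unfolding edge_closed_def
    using r unfolding realizes_def simple_graph_on_def n_def by blast
  then have "d ! 0 < n" using nth_less_card_edge_closed[OF r] \<open>d \<noteq> []\<close> n_def by fastforce
  then have "0 \<in> ?S" unfolding dd_def by simp
  then have "s_u d \<in> ?S" unfolding s_u_def n_def
    by (metis (no_types, lifting) Max_in empty_iff finite_nat_set_iff_bounded mem_Collect_eq)
  then show ?thesis unfolding n_def by simp
qed

lemma disconnected_realizable_if_step3:
  assumes "graphical_degree_sequence d" "d \<noteq> []" "step3 d"
  shows "disconnected_realizable d"
proof -
  obtain s where s: "dd d 1 + 1 \<le> s" "s \<le> s_u d" "graphical (take s d)" "graphical (drop s d)"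
    using assms(3) unfolding step3_def by blast
  have "s < length d" using s_u_less_length[OF assms(1,2)] s(2) by simp
  then show ?thesis
    using disconnected_realizable_if_split[OF s(3,4)] s(1) by (cases d) auto
qed

lemma min_index_below:
  assumes "1 \<le> i" "i \<le> length d" "dd d i < l"
  shows "1 \<le> min_index_below d l" "min_index_below d l \<le> i" "dd d (min_index_below d l) < l"
proof -
  let ?P = "\<lambda>i. 1 \<le> i \<and> i \<le> length d \<and> dd d i < l"
  have "?P i" using assms by blast
  then show "1 \<le> min_index_below d l" "dd d (min_index_below d l) < l"
    and "min_index_below d l \<le> i"
    using LeastI[of ?P] Least_le[of ?P] unfolding min_index_below_def by auto
qed

lemma disconnected_realizable_if_step4:
  assumes "step4 d"
  shows "disconnected_realizable d"
proof -
  define n where "n = length d"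
  obtain l I where l: "1 \<le> l" "l \<le> n div 2" "dd d (n + 1 - l) < l"
      and I: "I \<subseteq> {min_index_below d l..n}" "card I = l"
      "graphical (subseq_at d I)" "graphical (subseq_off d I)"
    using assms unfolding step4_def Let_def n_def by auto
  have "1 \<le> min_index_below d l"
    using min_index_below[of "n + 1 - l" d l] l n_def by auto
  then have I1: "I \<subseteq> {1..n}" using I(1) by auto
  define J where "J = (\<lambda>i. i - 1) ` I"
  have "J \<subseteq> {..<n}" using I1 unfolding J_def by (fastforce simp: subset_iff)
  moreover have "inj_on (\<lambda>i. i - 1) I"
    using I1 by (intro inj_onI) (metis One_nat_def Suc_pred atLeastAtMost_iff less_eq_Suc_le subsetD)
  then have "card J = l" using I(2) unfolding J_def by (simp add: card_image)
  ultimately have len: "length (subseq_at d I) = l"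
    unfolding subseq_at_def J_def[symmetric] length_nths n_def
    by (metis (no_types, lifting) Collect_cong lessThan_iff subsetD Collect_mem_eq)
  have "subseq_off d I = nths d (- J)" unfolding subseq_off_def J_def[symmetric]
    by (rule nths_cong) auto
  then have split: "mset d = mset (subseq_at d I @ subseq_off d I)"
    using mset_nths_add_mset_nths_compl[of d J] unfolding subseq_at_def J_def by simp
  then have "length (subseq_off d I) = n - l"
    using len unfolding n_def by (metis length_append size_mset add_diff_cancel_left')
  then have "subseq_at d I \<noteq> []" "subseq_off d I \<noteq> []" using len l by auto
  then show ?thesis using disconnected_realizable_if_split[OF I(3,4) _ _ split] by blast
qed

lemma small_edge_closed_part:
  assumes r: "realizes E d" and A: "proper_edge_closed (length d) E A"
  obtains C where "edge_closed (length d) E C" "edge_closed (length d) E ({..<length d} - C)"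
    "C \<noteq> {}" "2 * card C \<le> length d"
proof -
  define n where "n = length d"
  define B where "B = {..<n} - A"
  have sg: "simple_graph_on n E" using r unfolding realizes_def n_def by blast
  have cA: "edge_closed n E A" using A unfolding proper_edge_closed_def n_def by blast
  have cB: "edge_closed n E B" unfolding B_def by (rule edge_closed_compl[OF sg cA])
  have BB: "{..<n} - B = A" using cA unfolding B_def edge_closed_def by blast
  have ne: "A \<noteq> {}" "B \<noteq> {}"
    using A cA unfolding proper_edge_closed_def edge_closed_def B_def n_def by auto
  have cardB: "card B = n - card A" unfolding B_def by (rule card_compl_edge_closed[OF cA])
  have "card A \<le> n" using cA unfolding edge_closed_def by (metis card_lessThan card_mono finite_lessThan)
  show thesis
  proof (cases "card A \<le> card B")
    case True
    then show thesis using that[of A] cA cB ne cardB unfolding B_def n_def by linarith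
  next
    case False
    then have "2 * card B \<le> n" using cardB \<open>card A \<le> n\<close> by linarith
    then show thesis using that[of B] cA cB ne BB unfolding n_def by simp
  qed
qed

lemma low_degree_indices:
  assumes ni: "nonincreasing d" and C: "C \<subseteq> {..<length d}" "C \<noteq> {}"
    and low: "\<And>x. x \<in> C \<Longrightarrow> d ! x < card C"
  shows "dd d (length d + 1 - card C) < card C"
    and "1 \<le> min_index_below d (card C)" "min_index_below d (card C) \<le> length d"
    and "C \<subseteq> {min_index_below d (card C) - 1..<length d}"
proof -
  define n where "n = length d"
  define l where "l = card C"
  have "finite C" using C(1) finite_subset by blast
  then have l: "1 \<le> l" "l \<le> n"
    using C card_mono[OF _ C(1)] unfolding l_def n_def by (auto simp: Suc_le_eq card_gt_0_iff)
  have "\<exists>x\<in>C. x \<le> n - l"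
  proof (rule ccontr)
    assume "\<not> (\<exists>x\<in>C. x \<le> n - l)"
    then have "C \<subseteq> {n - l + 1..<n}" using C(1) n_def by (fastforce simp: not_le)
    then have "l \<le> card {n - l + 1..<n}" unfolding l_def by (meson card_mono finite_atLeastLessThan)
    then show False using l by simp
  qed
  then obtain x where "x \<in> C" "x \<le> n - l" by blast
  then have below: "dd d (n + 1 - l) < l"
    using low nonincreasing_nth_antimono[OF ni, of x "n - l"] l
    unfolding dd_def l_def n_def by fastforce
  then show "dd d (length d + 1 - card C) < card C" unfolding n_def l_def .
  have i: "1 \<le> n + 1 - l" "n + 1 - l \<le> length d" using l n_def by auto
  show "1 \<le> min_index_below d (card C)" "min_index_below d (card C) \<le> length d"
    using min_index_below[OF i below] i(2) unfolding l_def by auto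
  show "C \<subseteq> {min_index_below d (card C) - 1..<length d}"
  proof
    fix x assume x: "x \<in> C"
    then have "1 \<le> x + 1 \<and> x + 1 \<le> length d \<and> dd d (x + 1) < l"
      using C low unfolding dd_def l_def by auto
    then have "\<not> x + 1 < min_index_below d l"
      using not_less_Least[of "x + 1" "\<lambda>i. 1 \<le> i \<and> i \<le> length d \<and> dd d i < l"]
      unfolding min_index_below_def by blast
    then show "x \<in> {min_index_below d (card C) - 1..<length d}"
      using x C unfolding l_def by auto
  qed
qed

lemma extreme_degrees_if_small_edge_closed:
  assumes r: "realizes E d" and ni: "nonincreasing d"
    and cC: "edge_closed (length d) E C" and cD: "edge_closed (length d) E ({..<length d} - C)"
    and ne: "C \<noteq> {}" and half: "2 * card C \<le> length d"
  shows "dd d (length d) < card C" and "dd d 1 < length d - card C"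
proof -
  define n where "n = length d"
  have low: "d ! x < card C" if "x \<in> C" for x
    using nth_less_card_edge_closed[OF r cC that] .
  have Cn: "C \<subseteq> {..<n}" using cC unfolding edge_closed_def n_def by blast
  obtain c where "c \<in> C" using ne by blast
  then show "dd d (length d) < card C"
    using low Cn nonincreasing_nth_antimono[OF ni, of c "n - 1"] unfolding dd_def n_def by fastforce
  show "dd d 1 < length d - card C"
  proof (cases "0 \<in> C")
    case True
    then show ?thesis using low half unfolding dd_def by fastforce
  next
    case False
    then have "0 \<in> {..<length d} - C" using ne Cn n_def by auto
    then show ?thesis
      using nth_less_card_edge_closed[OF r cD] card_compl_edge_closed[OF cC] unfolding dd_def
      by fastforce
  qed
qed

lemma step3_if_prefix_suffix_split:
  assumes r: "realizes E d" and s: "d ! 0 < s" "s < length d" "d ! s < length d - s"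
    and cP: "edge_closed (length d) E {..<s}" and cS: "edge_closed (length d) E {s..<length d}"
  shows "step3 d"
proof -
  have "graphical (take s d)"
    using graphical_nths_edge_closed[OF r cP] by simp
  moreover have "drop s d = nths d {s..<length d}"
    unfolding drop_eq_nths by (rule nths_cong) auto
  then have "graphical (drop s d)" using graphical_nths_edge_closed[OF r cS] by simp
  moreover have "s \<le> s_u d"
    unfolding s_u_def by (rule Max_ge) (use s in \<open>auto simp: dd_def\<close>)
  ultimately show ?thesis unfolding step3_def dd_def using s by (auto intro!: exI[of _ s])
qed

lemma step4_if_low_split:
  fixes d :: "nat list"
  defines "n \<equiv> length d"
  assumes r: "realizes E d"
    and cC: "edge_closed n E C" and cD: "edge_closed n E ({..<n} - C)"
    and l: "dd d n < card C" "2 * card C \<le> n" "dd d 1 < n - card C"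
      "dd d (n + 1 - card C) < card C"
    and m: "C \<subseteq> {min_index_below d (card C) - 1..<n}"
      "card C \<le> n - min_index_below d (card C)"
  shows "step4 d"
proof -
  define I where "I = Suc ` C" \<comment> \<open>the procedure indexes from 1\<close>
  have I: "I \<subseteq> {min_index_below d (card C)..n}" "card I = card C"
    using m(1) unfolding I_def by (force simp: card_image)+
  have C: "(\<lambda>i. i - 1) ` I = C" unfolding I_def by (simp add: image_image)
  have "graphical (subseq_at d I)"
    unfolding subseq_at_def C using graphical_nths_edge_closed[OF r] cC n_def by simp
  moreover have "graphical (subseq_off d I)"
    unfolding subseq_off_def C using graphical_nths_edge_closed[OF r] cD n_def
    by (simp add: atLeast0LessThan)
  ultimately show ?thesis
    unfolding step4_def Let_def n_def[symmetric] using l m I even_sum_list_if_graphical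
    by (intro exI[of _ "card C"]) (auto intro!: exI[of _ I])
qed

lemma step3_or_step4_if_disconnected_realizable:
  assumes "disconnected_realizable d" and ni: "nonincreasing d"
  shows "step3 d \<or> step4 d"
proof -
  define n where "n = length d"
  obtain E A where r: "realizes E d" and A: "proper_edge_closed n E A"
    using assms(1) unfolding disconnected_realizable_iff n_def by blast
  obtain C where cC: "edge_closed n E C" and cD: "edge_closed n E ({..<n} - C)"
      and ne: "C \<noteq> {}" and half: "2 * card C \<le> n"
    using small_edge_closed_part[OF r A[unfolded n_def]] unfolding n_def by blast
  define l where "l = card C"
  define m where "m = min_index_below d l"
  have Cn: "C \<subseteq> {..<n}" using cC unfolding edge_closed_def by blast
  have "d ! x < l" if "x \<in> C" for x
    using nth_less_card_edge_closed[OF r] cC that unfolding l_def n_def by blast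
  then have below: "dd d (n + 1 - l) < l" and m: "1 \<le> m" "m \<le> n" and Cm: "C \<subseteq> {m - 1..<n}"
    using low_degree_indices[OF ni] Cn ne unfolding l_def m_def n_def by auto
  have last: "dd d n < l" and first: "dd d 1 < n - l"
    using extreme_degrees_if_small_edge_closed[OF r ni] cC cD ne half unfolding l_def n_def by auto
  have "l \<le> n - m + 1"
    using card_mono[OF _ Cm] unfolding l_def by simp
  then consider "l \<le> n - m" | "l = n - m + 1" by linarith
  then show ?thesis
  proof cases
    case 1
    then show ?thesis
      using step4_if_low_split[OF r cC[unfolded n_def] cD[unfolded n_def]] last half first below Cm
      unfolding l_def m_def n_def by simp
  next
    case 2
    then have "C = {n - l..<n}"
      using card_subset_eq[OF _ Cm] m unfolding l_def by (simp add: Suc_diff_le)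
    moreover have "{..<n} - {n - l..<n} = {..<n - l}" by auto
    ultimately show ?thesis
      using step3_if_prefix_suffix_split[OF r, of "n - l"] cC cD first below
      unfolding dd_def n_def by auto
  qed
qed

theorem mainTheorem1:
  fixes d :: "nat list"
  assumes "graphical_degree_sequence d"
    and "zero_free d"
  shows "procedure d \<longleftrightarrow> forcibly_connected d"
proof -
  have ni: "nonincreasing d" using assms(1) unfolding graphical_degree_sequence_def by blast
  show ?thesis
  proof (cases "step1 d")
    case True
    then have "\<not> disconnected_realizable d"
      using not_step1_if_disconnected_realizable ni assms(2) by blast
    then show ?thesis using True forcibly_connected_iff[OF assms(1)] unfolding procedure_def by simp
  next
    case False
    then have "d \<noteq> []" unfolding step1_def Let_def by auto
    have "disconnected_realizable d \<longleftrightarrow> step2 d \<or> step3 d \<or> step4 d"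
      using step3_or_step4_if_disconnected_realizable[OF _ ni]
        disconnected_realizable_if_step2[OF assms False]
        disconnected_realizable_if_step3[OF assms(1) \<open>d \<noteq> []\<close>]
        disconnected_realizable_if_step4 by blast
    then show ?thesis
      using False forcibly_connected_iff[OF assms(1)] unfolding procedure_def by auto
  qed
qed

end
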